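(* The function $f:(0,\infty)\to\mathbb{R}$, $f(z)=\tfrac12W(z)^2+W(z)$ (which equals $-T_2(-z)$ where $T_2(z)=\sum_{n\ge1}n^{n-2}z^n/n!$, for small $z$), is a Bernstein function.
   Context: $W$ is the principal branch of Lambert's W function: the solution of $W(z)e^{W(z)}=z$ that is real and positive for $z>0$, with $W(z)=\sum_{n\ge1}(-n)^{n-1}z^n/n!$ near $0$. A $C^\infty$ function $g:(0,\infty)\to\mathbb{R}$ is completely monotonic if $(-1)^ng^{(n)}(z)\ge0$ for all $z>0$ and $n\ge0$; $f$ is a Bernstein function if $f$ is $C^\infty$, $f(z)>0$ for all $z>0$, and $f'$ is completely monotonic. *)

theory Defs
  imports "HOL-Analysis.Analysis"
begin

definition lambertW :: "real \<Rightarrow> real" where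
  "lambertW z = (THE w. w > 0 \<and> w * exp w = z)"

definition smooth_on_real :: "real set \<Rightarrow> (real \<Rightarrow> real) \<Rightarrow> bool" where
  "smooth_on_real S g \<longleftrightarrow> (\<forall>n. \<forall>z\<in>S. ((deriv ^^ n) g) differentiable (at z))"

definition completely_monotonic :: "(real \<Rightarrow> real) \<Rightarrow> bool" where
  "completely_monotonic g \<longleftrightarrow> smooth_on_real {0<..} g \<and>
     (\<forall>n. \<forall>z>0. (-1) ^ n * (deriv ^^ n) g z \<ge> 0)"

definition bernstein_function :: "(real \<Rightarrow> real) \<Rightarrow> bool" where
  "bernstein_function f \<longleftrightarrow> smooth_on_real {0<..} f \<and> (\<forall>z>0. f z > 0) \<and>
     completely_monotonic (deriv f)"

end

theory Submission
  imports Defs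
begin

text \<open>Since \<open>W' = exp (-W) / (1 + W)\<close>, the derivative of \<open>f = W^2/2 + W\<close> is
  \<open>exp (-W)\<close>. Differentiating \<open>exp (-k W) / (1 + W)^m\<close> yields minus a nonnegative
  combination of \<open>exp (-(k+1) W) / (1 + W)^(m+1)\<close> and \<open>exp (-(k+1) W) / (1 + W)^(m+2)\<close>.
  So the nonnegative combinations of such terms form a cone of nonnegative functions
  that is mapped into itself by \<open>-d/dz\<close>, and every member of it, \<open>f'\<close> in particular,
  is completely monotonic.\<close>

lemma xexp_strict_mono:
  fixes a b :: real
  assumes "0 \<le> a" "a < b"
  shows "a * exp a < b * exp b"
proof -
  have "a * exp a \<le> a * exp b" using assms by (intro mult_left_mono) auto
  also have "\<dots> < b * exp b" using assms by (intro mult_strict_right_mono) auto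
  finally show ?thesis .
qed

lemma lambertW_unique_pos:
  fixes z :: real
  assumes "z > 0"
  shows "\<exists>!w. w > 0 \<and> w * exp w = z"
proof -
  have "\<exists>x\<ge>0. x \<le> z \<and> x * exp x = z"
    using assms by (intro IVT[where f = "\<lambda>w. w * exp w"]) (auto intro!: continuous_intros)
  then obtain x where "x \<ge> 0" "x * exp x = z" by blast
  moreover from this assms have "x > 0" by (cases "x = 0") auto
  moreover have "v = x" if "v > 0" "v * exp v = z" for v
    using xexp_strict_mono[of v x] xexp_strict_mono[of x v] that \<open>x > 0\<close> \<open>x * exp x = z\<close>
    by (cases v x rule: linorder_cases) auto
  ultimately show ?thesis by blast
qed

lemma lambertW_pos: "z > 0 \<Longrightarrow> lambertW z > 0"
  and lambertW_mult_exp: "z > 0 \<Longrightarrow> lambertW z * exp (lambertW z) = z"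
  unfolding lambertW_def using theI'[OF lambertW_unique_pos] by blast+

lemma lambertW_mult_exp_inverse:
  fixes w :: real
  assumes "w > 0"
  shows "lambertW (w * exp w) = w"
  unfolding lambertW_def using assms
  by (intro the1_equality lambertW_unique_pos) (auto intro: mult_pos_pos)

lemma isCont_lambertW:
  fixes z :: real
  assumes "z > 0"
  shows "isCont lambertW z"
proof -
  define w where "w = lambertW z"
  have w: "w > 0" "w * exp w = z"
    using lambertW_pos lambertW_mult_exp assms by (auto simp: w_def)
  have "isCont lambertW (w * exp w)"
  proof (rule isCont_inverse_function[where f = "\<lambda>v. v * exp v" and x = w and d = "w / 2"])
    show "0 < w / 2" using w by simp
  next
    fix v :: real
    assume "\<bar>v - w\<bar> \<le> w / 2"
    with w have "v > 0" by linarith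
    then show "lambertW (v * exp v) = v" by (rule lambertW_mult_exp_inverse)
    show "isCont (\<lambda>v. v * exp v) v" by (auto intro!: continuous_intros)
  qed
  with w show ?thesis by simp
qed

lemma lambertW_has_real_derivative:
  fixes z :: real
  assumes "z > 0"
  shows "(lambertW has_real_derivative exp (- lambertW z) / (1 + lambertW z)) (at z)"
proof -
  define w where "w = lambertW z"
  have w: "w > 0" using lambertW_pos assms by (simp add: w_def)
  have "((\<lambda>v. v * exp v) has_real_derivative exp w * (1 + w)) (at (lambertW z))"
    unfolding w_def by (auto intro!: derivative_eq_intros simp: algebra_simps)
  then have "(lambertW has_real_derivative inverse (exp w * (1 + w))) (at z)"
  proof (rule DERIV_inverse_function[where a = 0 and b = "z + 1"])
    show "lambertW y * exp (lambertW y) = y" if "0 < y" "y < z + 1" for y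
      using that lambertW_mult_exp by simp
  qed (use assms w isCont_lambertW in auto)
  moreover have "inverse (exp w * (1 + w)) = exp (- w) / (1 + w)"
    by (simp add: exp_minus field_simps)
  ultimately show ?thesis by (simp add: w_def)
qed

lemma exp_frac_has_real_derivative:
  fixes k w :: real
  assumes "w > -1"
  shows "((\<lambda>w. exp (- (k * w)) / (1 + w) ^ m) has_real_derivative
      - (k * exp (- (k * w)) / (1 + w) ^ m + m * exp (- (k * w)) / (1 + w) ^ Suc m)) (at w)"
proof -
  define u where "u = 1 + w"
  define E where "E = exp (- (k * w))"
  have u: "u > 0" using assms by (simp add: u_def)
  have "((\<lambda>w. exp (- (k * w)) / (1 + w) ^ m) has_real_derivative
      (- k * E * u ^ m - E * (m * u ^ (m - 1))) / (u ^ m * u ^ m)) (at w)"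
    unfolding u_def E_def using u
    by (auto intro!: derivative_eq_intros simp: u_def)
  moreover have "(- k * E * u ^ m - E * (m * u ^ (m - 1))) / (u ^ m * u ^ m)
      = - (k * E / u ^ m + m * E / u ^ Suc m)"
    using u by (cases m) (simp_all add: field_simps)
  ultimately show ?thesis by (simp add: u_def E_def)
qed

inductive exp_frac_cone :: "(real \<Rightarrow> real) \<Rightarrow> bool" where
  monomial: "c \<ge> 0 \<Longrightarrow> k \<ge> 0 \<Longrightarrow> exp_frac_cone (\<lambda>w. c * exp (- (k * w)) / (1 + w) ^ m)"
| add: "exp_frac_cone g \<Longrightarrow> exp_frac_cone h \<Longrightarrow> exp_frac_cone (\<lambda>w. g w + h w)"

lemma exp_frac_cone_nonneg: "exp_frac_cone g \<Longrightarrow> w > -1 \<Longrightarrow> g w \<ge> 0"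
  by (induction rule: exp_frac_cone.induct) auto

lemma exp_frac_cone_lambertW_derivative:
  assumes "exp_frac_cone g"
  shows "\<exists>g'. exp_frac_cone g' \<and>
    (\<forall>z>0. ((\<lambda>z. g (lambertW z)) has_real_derivative - g' (lambertW z)) (at z))"
  using assms
proof induction
  case (monomial c k m)
  define g' where "g' w = c * k * exp (- ((k + 1) * w)) / (1 + w) ^ Suc m
      + c * m * exp (- ((k + 1) * w)) / (1 + w) ^ Suc (Suc m)" for w
  have "exp_frac_cone g'"
    unfolding g'_def using monomial by (intro exp_frac_cone.intros) auto
  moreover have "((\<lambda>z. c * exp (- (k * lambertW z)) / (1 + lambertW z) ^ m)
      has_real_derivative - g' (lambertW z)) (at z)" if "z > 0" for z
  proof -
    define w where "w = lambertW z"
    have "w > 0" using lambertW_pos that by (simp add: w_def)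
    have deriv: "((\<lambda>z. c * (exp (- (k * lambertW z)) / (1 + lambertW z) ^ m)) has_real_derivative
        c * (- (k * exp (- (k * w)) / (1 + w) ^ m + m * exp (- (k * w)) / (1 + w) ^ Suc m)
          * (exp (- w) / (1 + w)))) (at z)"
      unfolding w_def using \<open>w > 0\<close>
      by (intro DERIV_cmult DERIV_chain2[OF exp_frac_has_real_derivative]
          lambertW_has_real_derivative that) (simp add: w_def)
    have derivative_eq: "c * (- (k * exp (- (k * w)) / (1 + w) ^ m + m * exp (- (k * w)) / (1 + w) ^ Suc m)
        * (exp (- w) / (1 + w))) = - g' w"
    proof -
      define u where "u = 1 + w"
      have "u > 0" "u ^ m > 0" using \<open>w > 0\<close> by (simp_all add: u_def)
      moreover have "exp (- (k * w)) * exp (- w) = exp (- ((k + 1) * w))"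
        by (simp add: algebra_simps flip: exp_add)
      ultimately show ?thesis
        unfolding g'_def u_def[symmetric] by (simp add: field_simps)
    qed
    show ?thesis using DERIV_cong[OF deriv derivative_eq] by (simp add: w_def)
  qed
  ultimately show ?case by blast
next
  case (add g h)
  then obtain g' h' where "exp_frac_cone g'" "exp_frac_cone h'"
    and "\<forall>z>0. ((\<lambda>z. g (lambertW z)) has_real_derivative - g' (lambertW z)) (at z)"
    and "\<forall>z>0. ((\<lambda>z. h (lambertW z)) has_real_derivative - h' (lambertW z)) (at z)"
    by blast
  moreover have "((\<lambda>z. g (lambertW z) + h (lambertW z)) has_real_derivative
      - g' (lambertW z) + - h' (lambertW z)) (at z)" if "z > 0" for z
    using calculation that by (intro DERIV_add) auto
  ultimately show ?case
    by (intro exI[of _ "\<lambda>w. g' w + h' w"]) (auto intro: exp_frac_cone.add)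
qed

lemma smooth_on_real_if_deriv:
  assumes "smooth_on_real S (deriv f)" and "\<And>z. z \<in> S \<Longrightarrow> f differentiable (at z)"
  shows "smooth_on_real S f"
  unfolding smooth_on_real_def
proof (intro allI ballI)
  fix n z assume "z \<in> S"
  then show "(deriv ^^ n) f differentiable (at z)"
    using assms unfolding smooth_on_real_def
    by (cases n) (simp_all only: funpow_Suc_right comp_def funpow_0)
qed

lemma completely_monotonic_if_derivative_closed:
  fixes P :: "(real \<Rightarrow> real) \<Rightarrow> bool"
  assumes closed: "\<And>g. P g \<Longrightarrow> \<exists>g'. P g' \<and> (\<forall>z>0. (g has_real_derivative - g' z) (at z))"
    and nonneg: "\<And>g z. P g \<Longrightarrow> z > 0 \<Longrightarrow> g z \<ge> 0"
    and "P g"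
  shows "completely_monotonic g"
proof -
  have step: "\<exists>h'. P h' \<and> (\<forall>z>0. (G has_real_derivative (-1) ^ Suc n * h' z) (at z))"
    if "P h" and "\<forall>z>0. G z = (-1) ^ n * h z" for G h n
  proof -
    obtain h' where "P h'" and h': "\<forall>z>0. (h has_real_derivative - h' z) (at z)"
      using closed \<open>P h\<close> by blast
    have "(G has_real_derivative (-1) ^ Suc n * h' z) (at z)" if "z > 0" for z
      using has_field_derivative_transform_within_open[OF DERIV_cmult[OF h'[rule_format, OF that],
          of "(-1) ^ n"], of "{0<..}" G] that \<open>\<forall>z>0. G z = (-1) ^ n * h z\<close>
      by auto
    with \<open>P h'\<close> show ?thesis by blast
  qed
  have iterate: "\<exists>h. P h \<and> (\<forall>z>0. (deriv ^^ n) g z = (-1) ^ n * h z)" for n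
  proof (induction n)
    case 0
    with \<open>P g\<close> show ?case by auto
  next
    case (Suc n)
    then obtain h where "P h" "\<forall>z>0. (deriv ^^ n) g z = (-1) ^ n * h z" by blast
    from step[OF this] obtain h' where "P h'"
      and "\<forall>z>0. ((deriv ^^ n) g has_real_derivative (-1) ^ Suc n * h' z) (at z)" by blast
    then show ?case by (intro exI[of _ h']) (auto simp: DERIV_imp_deriv)
  qed
  show ?thesis
    unfolding completely_monotonic_def smooth_on_real_def
  proof (intro conjI allI ballI impI)
    fix n and z :: real
    assume "z \<in> {0<..}"
    obtain h where "P h" "\<forall>z>0. (deriv ^^ n) g z = (-1) ^ n * h z" using iterate by blast
    from step[OF this] \<open>z \<in> {0<..}\<close> show "(deriv ^^ n) g differentiable (at z)"
      by (auto simp: real_differentiable_def)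
  next
    fix n and z :: real
    assume "z > 0"
    obtain h where "P h" "\<forall>z>0. (deriv ^^ n) g z = (-1) ^ n * h z" using iterate by blast
    with \<open>z > 0\<close> nonneg show "(-1) ^ n * (deriv ^^ n) g z \<ge> 0"
      by (simp flip: mult.assoc power_add add: power_mult_distrib[symmetric])
  qed
qed

lemma completely_monotonic_exp_frac_cone_lambertW:
  assumes "exp_frac_cone g" and "\<And>z. z > 0 \<Longrightarrow> h z = g (lambertW z)"
  shows "completely_monotonic h"
proof (rule completely_monotonic_if_derivative_closed)
  let ?P = "\<lambda>h. \<exists>g. exp_frac_cone g \<and> (\<forall>z>0. h z = g (lambertW z))"
  show "?P h" using assms by blast
  show "\<exists>g'. ?P g' \<and> (\<forall>z>0. (h has_real_derivative - g' z) (at z))" if "?P h" for h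
  proof -
    obtain g where g: "exp_frac_cone g" "\<forall>z>0. h z = g (lambertW z)" using \<open>?P h\<close> by blast
    then obtain g' where "exp_frac_cone g'"
      and g': "\<forall>z>0. ((\<lambda>z. g (lambertW z)) has_real_derivative - g' (lambertW z)) (at z)"
      using exp_frac_cone_lambertW_derivative by blast
    have "(h has_real_derivative - g' (lambertW z)) (at z)" if "z > 0" for z
      using has_field_derivative_transform_within_open[OF g'[rule_format, OF that], of "{0<..}" h]
        that g(2) by auto
    with \<open>exp_frac_cone g'\<close> show ?thesis
      by (intro exI[of _ "\<lambda>z. g' (lambertW z)"]) auto
  qed
  show "h z \<ge> 0" if "?P h" "z > 0" for h z
    using that lambertW_pos[of z] exp_frac_cone_nonneg by force
qed

lemma half_square_add_lambertW_has_real_derivative: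
  fixes z :: real
  assumes "z > 0"
  shows "((\<lambda>z. (1/2) * (lambertW z)^2 + lambertW z) has_real_derivative exp (- lambertW z)) (at z)"
proof -
  define D where "D = exp (- lambertW z) / (1 + lambertW z)"
  have "((\<lambda>z. (1/2) * (lambertW z)^2 + lambertW z) has_real_derivative (1 + lambertW z) * D) (at z)"
    using lambertW_has_real_derivative[OF assms] unfolding D_def[symmetric]
    by (auto intro!: derivative_eq_intros simp: algebra_simps)
  moreover have "1 + lambertW z > 0" using lambertW_pos[OF assms] by simp
  ultimately show ?thesis by (simp add: D_def)
qed

theorem mainTheorem9:
  shows "bernstein_function (\<lambda>z. (1/2) * (lambertW z)^2 + lambertW z)"
proof -
  define f where "f z = (1/2) * (lambertW z)^2 + lambertW z" for z
  have f': "(f has_real_derivative exp (- lambertW z)) (at z)" if "z > 0" for z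
    using half_square_add_lambertW_has_real_derivative[OF that] by (simp add: f_def[abs_def])
  have "completely_monotonic (deriv f)"
  proof (rule completely_monotonic_exp_frac_cone_lambertW)
    show "exp_frac_cone (\<lambda>w. 1 * exp (- (1 * w)) / (1 + w) ^ 0)"
      by (rule exp_frac_cone.monomial) simp_all
    show "deriv f z = 1 * exp (- (1 * lambertW z)) / (1 + lambertW z) ^ 0" if "z > 0" for z
      using DERIV_imp_deriv[OF f'[OF that]] by simp
  qed
  moreover have "smooth_on_real {0<..} f"
  proof (rule smooth_on_real_if_deriv)
    show "smooth_on_real {0<..} (deriv f)"
      using calculation unfolding completely_monotonic_def by blast
    show "f differentiable (at z)" if "z \<in> {0<..}" for z
      using f' that by (auto simp: real_differentiable_def)
  qed
  moreover have "f z > 0" if "z > 0" for z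
    using lambertW_pos[OF that] by (simp add: f_def add_nonneg_pos)
  ultimately show ?thesis
    unfolding bernstein_function_def f_def[abs_def] by auto
qed

end
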